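(* Let $G$ be a fermionic group with $(-1)^F\neq 1$, and let $d\ge1$. Then there is an exact sequence of topological groups \[ 1\to\operatorname{Spin}(d)\to H_d(G)\to G_b\to 1, \] where $G_b:=G/\langle(-1)^F\rangle$.
   Context: A fermionic group is a topological group $G$ together with a central element $(-1)^F$ with $((-1)^F)^2=1$ and a continuous homomorphism $\theta:G\to\mathbb{Z}_2$ with $\theta((-1)^F)=0$. The fermionic tensor product $A\otimes B$ of fermionic groups is the quotient $(A\times B)/\langle((-1)^F_A,(-1)^F_B)\rangle$, with product $(a_1\otimes b_1)(a_2\otimes b_2)=((-1)^F_A)^{\theta(a_2)\theta(b_1)}a_1a_2\otimes b_1b_2$ and grading $\theta(a\otimes b)=\theta(a)+\theta(b)$. The subscript $ev$ denotes the kernel of the grading. $\operatorname{Pin}^+(d)$ is the double cover of $O(d)$ in which lifts of reflections square to $+1$. It is graded by the determinant sign of its image in $O(d)$, so that its even part is $\operatorname{Spin}(d)$, and its fermion parity is $-1$. Finally, $H_d(G):=(\operatorname{Pin}^+(d)\otimes G)_{ev}$. *)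

theory Defs
  imports "HOL-Analysis.Analysis" "HOL-Algebra.Coset"
begin

definition topological_group :: "('a, 'm) monoid_scheme \<Rightarrow> 'a topology \<Rightarrow> bool" where
  "topological_group G T \<longleftrightarrow> group G \<and> topspace T = carrier G
     \<and> continuous_map (prod_topology T T) T (\<lambda>(x, y). x \<otimes>\<^bsub>G\<^esub> y)
     \<and> continuous_map T T (\<lambda>x. inv\<^bsub>G\<^esub> x)"

text \<open>Z_2 is modelled by bool, addition being exclusive or (\<open>\<noteq>\<close>), with the discrete topology.
  A fermionic group is (G, T, c, theta) where c is the fermion parity (-1)^F.\<close>
definition fermionic_group ::
  "('a, 'm) monoid_scheme \<Rightarrow> 'a topology \<Rightarrow> 'a \<Rightarrow> ('a \<Rightarrow> bool) \<Rightarrow> bool" where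
  "fermionic_group G T c \<theta> \<longleftrightarrow> topological_group G T
     \<and> c \<in> carrier G \<and> (\<forall>g \<in> carrier G. c \<otimes>\<^bsub>G\<^esub> g = g \<otimes>\<^bsub>G\<^esub> c)
     \<and> c \<otimes>\<^bsub>G\<^esub> c = \<one>\<^bsub>G\<^esub>
     \<and> (\<forall>x \<in> carrier G. \<forall>y \<in> carrier G. \<theta> (x \<otimes>\<^bsub>G\<^esub> y) = (\<theta> x \<noteq> \<theta> y))
     \<and> continuous_map T (discrete_topology UNIV) \<theta>
     \<and> \<theta> c = False"

definition quotient_topology :: "'a topology \<Rightarrow> ('a \<Rightarrow> 'b) \<Rightarrow> 'b topology" where
  "quotient_topology X f =
     topology (\<lambda>U. U \<subseteq> f ` topspace X \<and> openin X {x \<in> topspace X. f x \<in> U})"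

section \<open>The Clifford algebra Cl_{d,0} (generators square to +1) and Pin+(d)\<close>

text \<open>An element of the Clifford algebra on R^d is a real function on subsets of
  {0..<d} (coefficient of the monomial e_S), vanishing outside Pow {..<d}.\<close>
type_synonym cliff = "nat set \<Rightarrow> real"

definition cl_sign :: "nat set \<Rightarrow> nat set \<Rightarrow> real" where
  "cl_sign S T = (-1) ^ card {(i, j). i \<in> S \<and> j \<in> T \<and> j < i}"

definition cl_mult :: "nat \<Rightarrow> cliff \<Rightarrow> cliff \<Rightarrow> cliff" where
  "cl_mult d x y = (\<lambda>U. \<Sum>S\<in>Pow {..<d}. \<Sum>T\<in>Pow {..<d}.
       if S \<union> T - S \<inter> T = U then cl_sign S T * x S * y T else 0)"

definition cl_one :: cliff where
  "cl_one = (\<lambda>S. if S = {} then 1 else 0)"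

definition cl_vec :: "nat \<Rightarrow> (nat \<Rightarrow> real) \<Rightarrow> cliff" where
  "cl_vec d v = (\<lambda>S. if \<exists>i<d. S = {i} then v (the_elem S) else 0)"

text \<open>Pin+(d): all finite products of unit vectors of R^d inside the Clifford algebra
  (unit vectors square to +1, i.e. lifts of reflections square to +1).\<close>
definition pin_carrier :: "nat \<Rightarrow> cliff set" where
  "pin_carrier d = {foldr (cl_mult d) (map (cl_vec d) vs) cl_one | vs.
       \<forall>v \<in> set vs. (\<Sum>i<d. (v i)\<^sup>2) = 1}"

definition Pin_plus :: "nat \<Rightarrow> cliff monoid" where
  "Pin_plus d = \<lparr>carrier = pin_carrier d, mult = cl_mult d, one = cl_one\<rparr>"

text \<open>Topology: subspace of the finite-dimensional real vector space (product topology
  on functions, which coincides with the Euclidean one on Pow {..<d}-supported functions).\<close>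
definition pin_top :: "nat \<Rightarrow> cliff topology" where
  "pin_top d = top_of_set (pin_carrier d)"

definition pin_fermion :: cliff where
  "pin_fermion = (\<lambda>S. if S = {} then -1 else 0)"

text \<open>Grading of Pin+(d): the determinant sign of its image in O(d), i.e. whether the
  element is a product of an odd number of unit vectors (odd Clifford degree).\<close>
definition pin_grade :: "cliff \<Rightarrow> bool" where
  "pin_grade x = (\<exists>S. x S \<noteq> 0 \<and> odd (card S))"

definition Spin :: "nat \<Rightarrow> cliff monoid" where
  "Spin d = (Pin_plus d)\<lparr>carrier := {x \<in> pin_carrier d. \<not> pin_grade x}\<rparr>"

definition spin_top :: "nat \<Rightarrow> cliff topology" where
  "spin_top d = subtopology (pin_top d) {x \<in> pin_carrier d. \<not> pin_grade x}"

definition ftwist ::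
  "('a, 'm) monoid_scheme \<Rightarrow> 'a \<Rightarrow> ('a \<Rightarrow> bool) \<Rightarrow> ('b, 'n) monoid_scheme \<Rightarrow> ('b \<Rightarrow> bool)
     \<Rightarrow> ('a \<times> 'b) monoid" where
  "ftwist A cA \<theta>A B \<theta>B = \<lparr>carrier = carrier A \<times> carrier B,
     mult = (\<lambda>(a1, b1) (a2, b2).
        ((if \<theta>A a2 \<and> \<theta>B b1 then cA else \<one>\<^bsub>A\<^esub>) \<otimes>\<^bsub>A\<^esub> a1 \<otimes>\<^bsub>A\<^esub> a2, b1 \<otimes>\<^bsub>B\<^esub> b2)),
     one = (\<one>\<^bsub>A\<^esub>, \<one>\<^bsub>B\<^esub>)\<rparr>"

definition fN :: "('a, 'm) monoid_scheme \<Rightarrow> 'a \<Rightarrow> ('b, 'n) monoid_scheme \<Rightarrow> 'b \<Rightarrow> ('a \<times> 'b) set" where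
  "fN A cA B cB = {(\<one>\<^bsub>A\<^esub>, \<one>\<^bsub>B\<^esub>), (cA, cB)}"

definition ftensor ::
  "('a, 'm) monoid_scheme \<Rightarrow> 'a \<Rightarrow> ('a \<Rightarrow> bool) \<Rightarrow> ('b, 'n) monoid_scheme \<Rightarrow> 'b \<Rightarrow> ('b \<Rightarrow> bool)
     \<Rightarrow> ('a \<times> 'b) set monoid" where
  "ftensor A cA \<theta>A B cB \<theta>B = ftwist A cA \<theta>A B \<theta>B Mod fN A cA B cB"

definition ftensor_proj ::
  "('a, 'm) monoid_scheme \<Rightarrow> 'a \<Rightarrow> ('a \<Rightarrow> bool) \<Rightarrow> ('b, 'n) monoid_scheme \<Rightarrow> 'b \<Rightarrow> ('b \<Rightarrow> bool)
     \<Rightarrow> 'a \<times> 'b \<Rightarrow> ('a \<times> 'b) set" where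
  "ftensor_proj A cA \<theta>A B cB \<theta>B p = fN A cA B cB #>\<^bsub>ftwist A cA \<theta>A B \<theta>B\<^esub> p"

definition ftensor_ev_carrier ::
  "('a, 'm) monoid_scheme \<Rightarrow> 'a \<Rightarrow> ('a \<Rightarrow> bool) \<Rightarrow> ('b, 'n) monoid_scheme \<Rightarrow> 'b \<Rightarrow> ('b \<Rightarrow> bool)
     \<Rightarrow> ('a \<times> 'b) set set" where
  "ftensor_ev_carrier A cA \<theta>A B cB \<theta>B =
     {C \<in> carrier (ftensor A cA \<theta>A B cB \<theta>B). \<forall>(a, b) \<in> C. \<theta>A a = \<theta>B b}"

definition ftensor_ev ::
  "('a, 'm) monoid_scheme \<Rightarrow> 'a \<Rightarrow> ('a \<Rightarrow> bool) \<Rightarrow> ('b, 'n) monoid_scheme \<Rightarrow> 'b \<Rightarrow> ('b \<Rightarrow> bool)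
     \<Rightarrow> ('a \<times> 'b) set monoid" where
  "ftensor_ev A cA \<theta>A B cB \<theta>B =
     (ftensor A cA \<theta>A B cB \<theta>B)\<lparr>carrier := ftensor_ev_carrier A cA \<theta>A B cB \<theta>B\<rparr>"

definition ftensor_ev_top ::
  "('a, 'm) monoid_scheme \<Rightarrow> 'a topology \<Rightarrow> 'a \<Rightarrow> ('a \<Rightarrow> bool)
     \<Rightarrow> ('b, 'n) monoid_scheme \<Rightarrow> 'b topology \<Rightarrow> 'b \<Rightarrow> ('b \<Rightarrow> bool)
     \<Rightarrow> ('a \<times> 'b) set topology" where
  "ftensor_ev_top A TA cA \<theta>A B TB cB \<theta>B =
     subtopology (quotient_topology (prod_topology TA TB) (ftensor_proj A cA \<theta>A B cB \<theta>B))
       (ftensor_ev_carrier A cA \<theta>A B cB \<theta>B)"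

definition H_grp :: "nat \<Rightarrow> ('a, 'm) monoid_scheme \<Rightarrow> 'a \<Rightarrow> ('a \<Rightarrow> bool)
     \<Rightarrow> (cliff \<times> 'a) set monoid" where
  "H_grp d G c \<theta> = ftensor_ev (Pin_plus d) pin_fermion pin_grade G c \<theta>"

definition H_top :: "nat \<Rightarrow> ('a, 'm) monoid_scheme \<Rightarrow> 'a topology \<Rightarrow> 'a \<Rightarrow> ('a \<Rightarrow> bool)
     \<Rightarrow> (cliff \<times> 'a) set topology" where
  "H_top d G T c \<theta> = ftensor_ev_top (Pin_plus d) (pin_top d) pin_fermion pin_grade G T c \<theta>"

definition G_b :: "('a, 'm) monoid_scheme \<Rightarrow> 'a \<Rightarrow> 'a set monoid" where
  "G_b G c = G Mod {\<one>\<^bsub>G\<^esub>, c}"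

definition G_b_top :: "('a, 'm) monoid_scheme \<Rightarrow> 'a topology \<Rightarrow> 'a \<Rightarrow> 'a set topology" where
  "G_b_top G T c = quotient_topology T (\<lambda>g. {\<one>\<^bsub>G\<^esub>, c} #>\<^bsub>G\<^esub> g)"

end

theory Submission
  imports Defs
begin

text \<open>The fermion parity of Pin+(d) acts on the Clifford algebra by negation, so the class [a, g]
  of (a, g) in Pin+(d) \<otimes> G is the set {(a, g), (-a, (-1)^F g)}. Its set of second components is
  the class of g in G_b, which gives a continuous surjective homomorphism H_d(G) \<rightarrow> G_b; surjectivity
  onto odd g uses an odd element of Pin+(d), a unit vector e of R^d. The map x \<mapsto> [x, 1] is a
  homomorphism on Spin(d) because the twist in a product of such classes only sees the even second
  components 1 and (-1)^F, and it is injective because (-1)^F \<noteq> 1. An even class [a, g] lies in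
  the kernel iff g \<in> {1, (-1)^F}, and [a, (-1)^F] = [-a, 1] with -a = (-e) e a \<in> Spin(d).\<close>

section \<open>Clifford algebra computations\<close>

text \<open>The type cliff contains junk outside Pow {..<d}, which cl_mult ignores; identities such as
  1 y = y therefore hold only for supported y.\<close>

definition cl_supported :: "nat \<Rightarrow> cliff \<Rightarrow> bool" where
  "cl_supported d x \<longleftrightarrow> (\<forall>U. \<not> U \<subseteq> {..<d} \<longrightarrow> x U = 0)"

lemma cl_supported_mult: "cl_supported d (cl_mult d x y)"
  unfolding cl_supported_def cl_mult_def by (auto intro!: sum.neutral)

lemma cl_supported_one: "cl_supported d cl_one"
  unfolding cl_supported_def cl_one_def by auto

lemma cl_supported_pin_fermion: "cl_supported d pin_fermion"
  unfolding cl_supported_def pin_fermion_def by auto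

lemma cl_supported_uminus: "cl_supported d x \<Longrightarrow> cl_supported d (- x)"
  unfolding cl_supported_def by simp

lemma pin_carrier_supported:
  assumes "x \<in> pin_carrier d"
  shows "cl_supported d x"
proof -
  obtain vs where "x = foldr (cl_mult d) (map (cl_vec d) vs) cl_one"
    using assms unfolding pin_carrier_def by auto
  then show ?thesis
    by (cases vs) (auto simp: cl_supported_one cl_supported_mult)
qed

lemma foldr_cl_vec_in_pin_carrier:
  "(\<And>v. v \<in> set vs \<Longrightarrow> (\<Sum>i<d. (v i)\<^sup>2) = 1)
     \<Longrightarrow> foldr (cl_mult d) (map (cl_vec d) vs) cl_one \<in> pin_carrier d"
  unfolding pin_carrier_def by blast

lemma cl_one_in_pin_carrier: "cl_one \<in> pin_carrier d"
  using foldr_cl_vec_in_pin_carrier[of "[]"] by simp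

lemma not_pin_grade_cl_one: "\<not> pin_grade cl_one"
  unfolding pin_grade_def cl_one_def by auto

lemma pin_grade_uminus: "pin_grade (- x) = pin_grade x"
  unfolding pin_grade_def by simp

lemma cl_sign_empty: "cl_sign {} T = 1"
  by (simp add: cl_sign_def)

lemma cl_sign_zero: "cl_sign {0} T = 1"
proof -
  have no_inversions: "{(i, j). i \<in> {0::nat} \<and> j \<in> T \<and> j < i} = {}"
    by auto
  show ?thesis
    unfolding cl_sign_def no_inversions by simp
qed

lemma cl_mult_monomial_left:
  assumes Z: "Z \<subseteq> {..<d}" and sign: "\<And>T. cl_sign Z T = 1" and y: "cl_supported d y"
  shows "cl_mult d (\<lambda>S. if S = Z then k else 0) y = (\<lambda>U. k * y (sym_diff U Z))"
proof
  fix U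
  have symdiff: "Z \<union> T - Z \<inter> T = U \<longleftrightarrow> T = sym_diff U Z" for T
    by blast
  have "cl_mult d (\<lambda>S. if S = Z then k else 0) y U
      = (\<Sum>S\<in>Pow {..<d}. if S = Z then (\<Sum>T\<in>Pow {..<d}.
           if Z \<union> T - Z \<inter> T = U then cl_sign Z T * k * y T else 0) else 0)"
    unfolding cl_mult_def by (rule sum.cong) (auto cong: if_cong)
  also have "\<dots> = (\<Sum>T\<in>Pow {..<d}. if Z \<union> T - Z \<inter> T = U then cl_sign Z T * k * y T else 0)"
    using Z by simp
  also have "\<dots> = (\<Sum>T\<in>Pow {..<d}. if T = sym_diff U Z then k * y T else 0)"
    by (rule sum.cong) (auto simp: sign symdiff)
  also have "\<dots> = k * y (sym_diff U Z)"
    using y Z by (auto simp: cl_supported_def)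
  finally show "cl_mult d (\<lambda>S. if S = Z then k else 0) y U = k * y (sym_diff U Z)" .
qed

lemma cl_mult_one_left: "cl_supported d y \<Longrightarrow> cl_mult d cl_one y = y"
  by (simp add: cl_one_def cl_mult_monomial_left cl_sign_empty)

lemma cl_mult_pin_fermion_left: "cl_supported d y \<Longrightarrow> cl_mult d pin_fermion y = - y"
  by (simp add: pin_fermion_def cl_mult_monomial_left cl_sign_empty fun_Compl_def)

lemma cl_mult_uminus_left: "cl_mult d (- x) y = - cl_mult d x y"
  unfolding cl_mult_def fun_Compl_def by (auto simp: sum_negf[symmetric] intro!: sum.cong)

lemma cl_mult_uminus_right: "cl_mult d x (- y) = - cl_mult d x y"
  unfolding cl_mult_def fun_Compl_def by (auto simp: sum_negf[symmetric] intro!: sum.cong)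

definition basis0 :: "nat \<Rightarrow> real" where
  "basis0 i = (if i = 0 then 1 else 0)"

lemma sum_sq_basis0:
  assumes "d \<ge> 1"
  shows "(\<Sum>i<d. (basis0 i)\<^sup>2) = 1"
proof -
  have "(\<Sum>i<d. (basis0 i)\<^sup>2) = (\<Sum>i<d. if i = 0 then 1 else 0)"
    by (rule sum.cong) (auto simp: basis0_def)
  then show ?thesis
    using assms by simp
qed

lemma cl_vec_basis0: "d \<ge> 1 \<Longrightarrow> cl_vec d basis0 = (\<lambda>S. if S = {0} then 1 else 0)"
  unfolding cl_vec_def basis0_def by (rule ext) auto

lemma cl_vec_uminus: "cl_vec d (- v) = - cl_vec d v"
  unfolding cl_vec_def by (auto simp: fun_eq_iff)

lemma cl_mult_basis0_left:
  "d \<ge> 1 \<Longrightarrow> cl_supported d y \<Longrightarrow> cl_mult d (cl_vec d basis0) y = (\<lambda>U. y (sym_diff U {0}))"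
  by (simp add: cl_vec_basis0 cl_mult_monomial_left cl_sign_zero)

lemma cl_mult_basis0_basis0:
  assumes "d \<ge> 1" and "cl_supported d y"
  shows "cl_mult d (cl_vec d basis0) (cl_mult d (cl_vec d basis0) y) = y"
proof -
  have involution: "sym_diff (sym_diff U {0}) {0} = U" for U :: "nat set"
    by blast
  have "cl_mult d (cl_vec d basis0) (cl_mult d (cl_vec d basis0) y)
      = (\<lambda>U. cl_mult d (cl_vec d basis0) y (sym_diff U {0}))"
    using assms(1) cl_supported_mult by (rule cl_mult_basis0_left)
  also have "\<dots> = (\<lambda>U. y (sym_diff (sym_diff U {0}) {0}))"
    using assms by (simp add: cl_mult_basis0_left)
  finally show ?thesis
    by (simp only: involution)
qed

lemma cl_vec_basis0_in_pin_carrier: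
  assumes "d \<ge> 1"
  shows "cl_vec d basis0 \<in> pin_carrier d"
proof -
  have "cl_mult d (cl_vec d basis0) cl_one = cl_vec d basis0"
    using cl_mult_basis0_left[OF assms cl_supported_one]
    by (auto simp: cl_vec_basis0[OF assms] cl_one_def fun_eq_iff)
  then show ?thesis
    using foldr_cl_vec_in_pin_carrier[of "[basis0]" d] assms by (simp add: sum_sq_basis0)
qed

lemma pin_grade_cl_vec_basis0: "d \<ge> 1 \<Longrightarrow> pin_grade (cl_vec d basis0)"
  unfolding pin_grade_def by (intro exI[of _ "{0}"]) (simp add: cl_vec_basis0)

lemma pin_carrier_uminus:
  assumes "d \<ge> 1" and "x \<in> pin_carrier d"
  shows "- x \<in> pin_carrier d"
proof -
  obtain vs where x: "x = foldr (cl_mult d) (map (cl_vec d) vs) cl_one"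
    and vs: "\<forall>v \<in> set vs. (\<Sum>i<d. (v i)\<^sup>2) = 1"
    using assms(2) unfolding pin_carrier_def by auto
  have "- x = foldr (cl_mult d) (map (cl_vec d) (- basis0 # basis0 # vs)) cl_one"
    using assms by (simp add: x[symmetric] cl_vec_uminus cl_mult_uminus_left
        cl_mult_basis0_basis0 pin_carrier_supported)
  also have "\<dots> \<in> pin_carrier d"
    using vs assms(1) by (intro foldr_cl_vec_in_pin_carrier) (auto simp: sum_sq_basis0)
  finally show ?thesis .
qed

section \<open>Quotient topology\<close>

lemma openin_quotient_topology:
  "openin (quotient_topology X f) U \<longleftrightarrow> U \<subseteq> f ` topspace X \<and> openin X {x \<in> topspace X. f x \<in> U}"
proof -
  have "istopology (\<lambda>U. U \<subseteq> f ` topspace X \<and> openin X {x \<in> topspace X. f x \<in> U})"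
    unfolding istopology_def
  proof (rule conjI; intro allI impI)
    fix S T
    assume "S \<subseteq> f ` topspace X \<and> openin X {x \<in> topspace X. f x \<in> S}"
      and "T \<subseteq> f ` topspace X \<and> openin X {x \<in> topspace X. f x \<in> T}"
    moreover have "{x \<in> topspace X. f x \<in> S \<inter> T}
        = {x \<in> topspace X. f x \<in> S} \<inter> {x \<in> topspace X. f x \<in> T}"
      by auto
    ultimately show "S \<inter> T \<subseteq> f ` topspace X \<and> openin X {x \<in> topspace X. f x \<in> S \<inter> T}"
      by auto
  next
    fix K
    assume K: "\<forall>k\<in>K. k \<subseteq> f ` topspace X \<and> openin X {x \<in> topspace X. f x \<in> k}"
    have "{x \<in> topspace X. f x \<in> \<Union>K} = (\<Union>k\<in>K. {x \<in> topspace X. f x \<in> k})"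
      by auto
    then show "\<Union>K \<subseteq> f ` topspace X \<and> openin X {x \<in> topspace X. f x \<in> \<Union>K}"
      using K by auto
  qed
  then show ?thesis
    unfolding quotient_topology_def by simp
qed

lemma topspace_quotient_topology: "topspace (quotient_topology X f) = f ` topspace X"
proof
  show "topspace (quotient_topology X f) \<subseteq> f ` topspace X"
    by (metis openin_quotient_topology openin_topspace)
  have "{x \<in> topspace X. f x \<in> f ` topspace X} = topspace X"
    by blast
  then have "openin (quotient_topology X f) (f ` topspace X)"
    by (simp add: openin_quotient_topology)
  then show "f ` topspace X \<subseteq> topspace (quotient_topology X f)"
    by (rule openin_subset)
qed

lemma continuous_map_quotient_topology: "continuous_map X (quotient_topology X f) f"
  unfolding continuous_map_def topspace_quotient_topology
  by (auto simp: openin_quotient_topology)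

lemma continuous_map_from_quotient_topology:
  assumes "continuous_map X Y (\<lambda>x. g (f x))"
  shows "continuous_map (quotient_topology X f) Y g"
  unfolding continuous_map_def topspace_quotient_topology
proof (intro conjI allI impI)
  show "g \<in> f ` topspace X \<rightarrow> topspace Y"
    using continuous_map_image_subset_topspace[OF assms] by auto
  fix V
  assume "openin Y V"
  then have "openin X {x \<in> topspace X. g (f x) \<in> V}"
    using assms by (simp add: openin_continuous_map_preimage)
  moreover have "{x \<in> topspace X. f x \<in> {q \<in> f ` topspace X. g q \<in> V}}
      = {x \<in> topspace X. g (f x) \<in> V}"
    by blast
  ultimately show "openin (quotient_topology X f) {q \<in> f ` topspace X. g q \<in> V}"
    by (simp add: openin_quotient_topology)
qed

section \<open>Classes in Pin+(d) \<otimes> G\<close>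

lemma carrier_Spin: "carrier (Spin d) = {x \<in> pin_carrier d. \<not> pin_grade x}"
  by (simp add: Spin_def Pin_plus_def)

lemma mult_Spin: "x \<otimes>\<^bsub>Spin d\<^esub> y = cl_mult d x y"
  by (simp add: Spin_def Pin_plus_def)

lemma carrier_H_grp:
  "carrier (H_grp d G c \<theta>) = {C \<in> rcosets\<^bsub>ftwist (Pin_plus d) pin_fermion pin_grade G \<theta>\<^esub>
     fN (Pin_plus d) pin_fermion G c. \<forall>(a, g) \<in> C. pin_grade a = \<theta> g}"
  by (simp add: H_grp_def ftensor_ev_def ftensor_ev_carrier_def ftensor_def FactGroup_def)

lemma mult_H_grp:
  "C \<otimes>\<^bsub>H_grp d G c \<theta>\<^esub> D = set_mult (ftwist (Pin_plus d) pin_fermion pin_grade G \<theta>) C D"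
  by (simp add: H_grp_def ftensor_ev_def ftensor_def)

lemma H_top_eq:
  "H_top d G T c \<theta> = subtopology (quotient_topology (prod_topology (pin_top d) T)
     (ftensor_proj (Pin_plus d) pin_fermion pin_grade G c \<theta>)) (carrier (H_grp d G c \<theta>))"
  by (simp add: H_top_def ftensor_ev_top_def H_grp_def ftensor_ev_def)

lemma ftensor_proj_Pin_plus:
  assumes "group G" and "c \<in> carrier G" and "\<not> \<theta> \<one>\<^bsub>G\<^esub>" and "\<not> \<theta> c"
    and "cl_supported d a" and "g \<in> carrier G"
  shows "ftensor_proj (Pin_plus d) pin_fermion pin_grade G c \<theta> (a, g)
    = {(a, g), (- a, c \<otimes>\<^bsub>G\<^esub> g)}"
proof -
  interpret group G by fact
  show ?thesis
    using assms by (auto simp: ftensor_proj_def r_coset_def ftwist_def fN_def Pin_plus_def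
        cl_mult_one_left cl_supported_one cl_mult_pin_fermion_left cl_supported_pin_fermion)
qed

lemma snd_set_mult_ftwist:
  "snd ` set_mult (ftwist A cA \<theta>A B \<theta>B) X Y = set_mult B (snd ` X) (snd ` Y)"
  unfolding set_mult_def ftwist_def by (force split: prod.splits)

lemma set_mult_ftwist_Pin_plus:
  assumes "group G" and "c \<in> carrier G" and "c \<otimes>\<^bsub>G\<^esub> c = \<one>\<^bsub>G\<^esub>"
    and "\<not> \<theta> \<one>\<^bsub>G\<^esub>" and "\<not> \<theta> c" and "cl_supported d x"
  shows "set_mult (ftwist (Pin_plus d) pin_fermion pin_grade G \<theta>)
      {(x, \<one>\<^bsub>G\<^esub>), (- x, c)} {(y, \<one>\<^bsub>G\<^esub>), (- y, c)}
    = {(cl_mult d x y, \<one>\<^bsub>G\<^esub>), (- cl_mult d x y, c)}"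
proof -
  interpret group G by fact
  show ?thesis
    using assms by (auto simp: set_mult_def ftwist_def Pin_plus_def cl_mult_one_left
        cl_supported_uminus cl_mult_uminus_left cl_mult_uminus_right)
qed

section \<open>The extension Spin(d) \<rightarrow> H_d(G) \<rightarrow> G_b\<close>

locale pin_tensor =
  fixes G :: "'a monoid" and T :: "'a topology" and c :: 'a and \<theta> :: "'a \<Rightarrow> bool"
    and d :: nat
  assumes fermionic: "fermionic_group G T c \<theta>"
    and dim_pos: "d \<ge> 1"
begin

sublocale group G
  using fermionic by (simp add: fermionic_group_def topological_group_def)

lemma
  shows topspace_T: "topspace T = carrier G"
    and c_closed: "c \<in> carrier G"
    and c_square: "c \<otimes>\<^bsub>G\<^esub> c = \<one>\<^bsub>G\<^esub>"
    and theta_mult: "\<And>x y. x \<in> carrier G \<Longrightarrow> y \<in> carrier G \<Longrightarrow> \<theta> (x \<otimes>\<^bsub>G\<^esub> y) = (\<theta> x \<noteq> \<theta> y)"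
    and not_theta_c: "\<not> \<theta> c"
  using fermionic unfolding fermionic_group_def topological_group_def by auto

lemma not_theta_one: "\<not> \<theta> \<one>\<^bsub>G\<^esub>"
  using theta_mult[of "\<one>\<^bsub>G\<^esub>" "\<one>\<^bsub>G\<^esub>"] by simp

lemma theta_c_mult: "g \<in> carrier G \<Longrightarrow> \<theta> (c \<otimes>\<^bsub>G\<^esub> g) = \<theta> g"
  using theta_mult c_closed not_theta_c by simp

abbreviation tensor_class :: "cliff \<times> 'a \<Rightarrow> (cliff \<times> 'a) set" where
  "tensor_class \<equiv> ftensor_proj (Pin_plus d) pin_fermion pin_grade G c \<theta>"

definition spin_incl :: "cliff \<Rightarrow> (cliff \<times> 'a) set" where
  "spin_incl x = tensor_class (x, \<one>\<^bsub>G\<^esub>)"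

lemma tensor_class_eq:
  "cl_supported d a \<Longrightarrow> g \<in> carrier G \<Longrightarrow> tensor_class (a, g) = {(a, g), (- a, c \<otimes>\<^bsub>G\<^esub> g)}"
  by (rule ftensor_proj_Pin_plus[OF is_group c_closed not_theta_one not_theta_c])

lemma spin_incl_eq: "cl_supported d x \<Longrightarrow> spin_incl x = {(x, \<one>\<^bsub>G\<^esub>), (- x, c)}"
  by (simp add: spin_incl_def tensor_class_eq c_closed)

lemma snd_tensor_class:
  "cl_supported d a \<Longrightarrow> g \<in> carrier G \<Longrightarrow> snd ` tensor_class (a, g) = {g, c \<otimes>\<^bsub>G\<^esub> g}"
  by (simp add: tensor_class_eq)

lemma rcosets_ftwist:
  "rcosets\<^bsub>ftwist (Pin_plus d) pin_fermion pin_grade G \<theta>\<^esub> fN (Pin_plus d) pin_fermion G c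
     = tensor_class ` (pin_carrier d \<times> carrier G)"
proof -
  have "carrier (ftwist (Pin_plus d) pin_fermion pin_grade G \<theta>) = pin_carrier d \<times> carrier G"
    by (simp add: ftwist_def Pin_plus_def)
  then show ?thesis
    unfolding RCOSETS_def ftensor_proj_def by auto
qed

lemma carrier_H_grp_iff:
  "C \<in> carrier (H_grp d G c \<theta>) \<longleftrightarrow>
     (\<exists>a \<in> pin_carrier d. \<exists>g \<in> carrier G. pin_grade a = \<theta> g \<and> C = tensor_class (a, g))"
proof -
  have "(\<forall>(a', g') \<in> tensor_class (a, g). pin_grade a' = \<theta> g') \<longleftrightarrow> pin_grade a = \<theta> g"
    if "a \<in> pin_carrier d" and "g \<in> carrier G" for a g
    using that by (simp add: tensor_class_eq pin_carrier_supported pin_grade_uminus theta_c_mult)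
  then show ?thesis
    unfolding carrier_H_grp rcosets_ftwist by blast
qed

lemma carrier_G_b: "carrier (G_b G c) = {{g, c \<otimes>\<^bsub>G\<^esub> g} | g. g \<in> carrier G}"
proof -
  have "{\<one>\<^bsub>G\<^esub>, c} #>\<^bsub>G\<^esub> g = {g, c \<otimes>\<^bsub>G\<^esub> g}" if "g \<in> carrier G" for g
    using that by (auto simp: r_coset_def)
  then show ?thesis
    by (auto simp: G_b_def FactGroup_def RCOSETS_def)
qed

lemma spin_incl_in_carrier: "x \<in> carrier (Spin d) \<Longrightarrow> spin_incl x \<in> carrier (H_grp d G c \<theta>)"
  unfolding carrier_H_grp_iff carrier_Spin spin_incl_def using not_theta_one by blast

lemma spin_incl_hom: "spin_incl \<in> hom (Spin d) (H_grp d G c \<theta>)"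
proof (rule homI)
  fix x y
  assume "x \<in> carrier (Spin d)" and "y \<in> carrier (Spin d)"
  then have "cl_supported d x" and "cl_supported d y"
    by (auto simp: carrier_Spin pin_carrier_supported)
  then show "spin_incl (x \<otimes>\<^bsub>Spin d\<^esub> y) = spin_incl x \<otimes>\<^bsub>H_grp d G c \<theta>\<^esub> spin_incl y"
    by (simp add: mult_Spin mult_H_grp spin_incl_eq cl_supported_mult set_mult_ftwist_Pin_plus
        c_closed c_square not_theta_one not_theta_c)
qed (rule spin_incl_in_carrier)

lemma inj_on_spin_incl:
  assumes "c \<noteq> \<one>\<^bsub>G\<^esub>"
  shows "inj_on spin_incl (carrier (Spin d))"
proof (rule inj_onI)
  fix x y
  assume "x \<in> carrier (Spin d)" and "y \<in> carrier (Spin d)" and "spin_incl x = spin_incl y"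
  then have "(x, \<one>\<^bsub>G\<^esub>) \<in> {(y, \<one>\<^bsub>G\<^esub>), (- y, c)}"
    by (auto simp: carrier_Spin pin_carrier_supported spin_incl_eq)
  then show "x = y"
    using assms by auto
qed

lemma snd_image_hom: "(\<lambda>C. snd ` C) \<in> hom (H_grp d G c \<theta>) (G_b G c)"
proof (rule homI)
  fix C
  assume "C \<in> carrier (H_grp d G c \<theta>)"
  then show "snd ` C \<in> carrier (G_b G c)"
    unfolding carrier_H_grp_iff carrier_G_b by (auto simp: snd_tensor_class pin_carrier_supported)
next
  fix C D
  show "snd ` (C \<otimes>\<^bsub>H_grp d G c \<theta>\<^esub> D) = snd ` C \<otimes>\<^bsub>G_b G c\<^esub> snd ` D"
    by (simp add: mult_H_grp snd_set_mult_ftwist G_b_def)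
qed

lemma snd_image_surj: "(\<lambda>C. snd ` C) ` carrier (H_grp d G c \<theta>) = carrier (G_b G c)"
proof
  show "(\<lambda>C. snd ` C) ` carrier (H_grp d G c \<theta>) \<subseteq> carrier (G_b G c)"
    using snd_image_hom by (auto simp: hom_def)
  show "carrier (G_b G c) \<subseteq> (\<lambda>C. snd ` C) ` carrier (H_grp d G c \<theta>)"
  proof
    fix X
    assume "X \<in> carrier (G_b G c)"
    then obtain g where g: "g \<in> carrier G" and X: "X = {g, c \<otimes>\<^bsub>G\<^esub> g}"
      unfolding carrier_G_b by auto
    define a where "a = (if \<theta> g then cl_vec d basis0 else cl_one)"
    have a: "a \<in> pin_carrier d" "pin_grade a = \<theta> g"
      unfolding a_def using dim_pos
      by (auto simp: cl_vec_basis0_in_pin_carrier pin_grade_cl_vec_basis0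
          cl_one_in_pin_carrier not_pin_grade_cl_one)
    then have "tensor_class (a, g) \<in> carrier (H_grp d G c \<theta>)"
      using g carrier_H_grp_iff by blast
    moreover have "snd ` tensor_class (a, g) = X"
      using a g X by (simp add: snd_tensor_class pin_carrier_supported)
    ultimately show "X \<in> (\<lambda>C. snd ` C) ` carrier (H_grp d G c \<theta>)"
      by blast
  qed
qed

lemma image_spin_incl_eq_kernel:
  "spin_incl ` carrier (Spin d) = kernel (H_grp d G c \<theta>) (G_b G c) (\<lambda>C. snd ` C)"
proof
  show "spin_incl ` carrier (Spin d) \<subseteq> kernel (H_grp d G c \<theta>) (G_b G c) (\<lambda>C. snd ` C)"
  proof
    fix C
    assume "C \<in> spin_incl ` carrier (Spin d)"
    then obtain x where x: "x \<in> carrier (Spin d)" and C_eq: "C = spin_incl x"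
      by blast
    then have "C \<in> carrier (H_grp d G c \<theta>)"
      by (simp add: spin_incl_in_carrier)
    moreover have "snd ` C = {\<one>\<^bsub>G\<^esub>, c}"
      using x by (auto simp: C_eq carrier_Spin spin_incl_eq pin_carrier_supported)
    ultimately show "C \<in> kernel (H_grp d G c \<theta>) (G_b G c) (\<lambda>C. snd ` C)"
      by (simp add: kernel_def G_b_def)
  qed
  show "kernel (H_grp d G c \<theta>) (G_b G c) (\<lambda>C. snd ` C) \<subseteq> spin_incl ` carrier (Spin d)"
  proof
    fix C
    assume "C \<in> kernel (H_grp d G c \<theta>) (G_b G c) (\<lambda>C. snd ` C)"
    then have C: "C \<in> carrier (H_grp d G c \<theta>)" and snd_C: "snd ` C = {\<one>\<^bsub>G\<^esub>, c}"
      by (auto simp: kernel_def G_b_def)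
    obtain a g where a: "a \<in> pin_carrier d" and g: "g \<in> carrier G"
      and grade: "pin_grade a = \<theta> g" and C_eq: "C = tensor_class (a, g)"
      using C carrier_H_grp_iff by blast
    have "g \<in> snd ` C"
      using g a by (simp add: C_eq snd_tensor_class pin_carrier_supported)
    then have "g \<in> {\<one>\<^bsub>G\<^esub>, c}"
      by (simp add: snd_C)
    then consider "g = \<one>\<^bsub>G\<^esub>" | "g = c"
      by blast
    then show "C \<in> spin_incl ` carrier (Spin d)"
    proof cases
      case 1
      then have "C = spin_incl a" and "a \<in> carrier (Spin d)"
        using C_eq grade a not_theta_one by (auto simp: spin_incl_def carrier_Spin)
      then show ?thesis
        by blast
    next
      case 2
      then have "C = {(a, c), (- a, \<one>\<^bsub>G\<^esub>)}"
        using C_eq a by (simp add: tensor_class_eq pin_carrier_supported c_closed c_square)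
      also have "\<dots> = spin_incl (- a)"
        using a by (auto simp: spin_incl_eq pin_carrier_supported cl_supported_uminus)
      finally have "C = spin_incl (- a)" .
      moreover have "- a \<in> carrier (Spin d)"
        using 2 grade a dim_pos not_theta_c
        by (simp add: carrier_Spin pin_carrier_uminus pin_grade_uminus)
      ultimately show ?thesis
        by blast
    qed
  qed
qed

lemma continuous_map_spin_incl: "continuous_map (spin_top d) (H_top d G T c \<theta>) spin_incl"
proof -
  have "continuous_map (spin_top d) (prod_topology (pin_top d) T) (\<lambda>x. (x, \<one>\<^bsub>G\<^esub>))"
    unfolding spin_top_def
    by (intro continuous_map_pairedI continuous_map_from_subtopology continuous_map_id[unfolded id_def])
      (simp add: topspace_T)
  then have "continuous_map (spin_top d)
      (quotient_topology (prod_topology (pin_top d) T) tensor_class) spin_incl"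
    unfolding spin_incl_def
    using continuous_map_compose[OF _ continuous_map_quotient_topology] by (simp add: o_def)
  moreover have "spin_incl ` topspace (spin_top d) \<subseteq> carrier (H_grp d G c \<theta>)"
    using spin_incl_in_carrier by (auto simp: spin_top_def pin_top_def carrier_Spin)
  ultimately show ?thesis
    by (simp add: H_top_eq continuous_map_in_subtopology image_subset_iff_funcset)
qed

lemma continuous_map_snd_image:
  "continuous_map (H_top d G T c \<theta>) (G_b_top G T c) (\<lambda>C. snd ` C)"
proof -
  have "continuous_map (prod_topology (pin_top d) T) (G_b_top G T c)
      (\<lambda>x. {\<one>\<^bsub>G\<^esub>, c} #>\<^bsub>G\<^esub> snd x)"
    unfolding G_b_top_def
    using continuous_map_compose[OF continuous_map_snd continuous_map_quotient_topology]
    by (simp add: o_def)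
  then have "continuous_map (prod_topology (pin_top d) T) (G_b_top G T c)
      (\<lambda>x. snd ` tensor_class x)"
    by (rule continuous_map_eq)
      (auto simp: pin_top_def topspace_T r_coset_def tensor_class_eq pin_carrier_supported)
  then show ?thesis
    unfolding H_top_eq
    by (intro continuous_map_from_subtopology continuous_map_from_quotient_topology)
qed

end

theorem mainTheorem5:
  fixes G :: "'a monoid" and T :: "'a topology" and c :: 'a and \<theta> :: "'a \<Rightarrow> bool"
    and d :: nat
  assumes "fermionic_group G T c \<theta>"
    and "c \<noteq> \<one>\<^bsub>G\<^esub>"
    and "d \<ge> 1"
  shows "\<exists>i p. i \<in> hom (Spin d) (H_grp d G c \<theta>)
             \<and> continuous_map (spin_top d) (H_top d G T c \<theta>) i
             \<and> inj_on i (carrier (Spin d))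
             \<and> p \<in> hom (H_grp d G c \<theta>) (G_b G c)
             \<and> continuous_map (H_top d G T c \<theta>) (G_b_top G T c) p
             \<and> p ` carrier (H_grp d G c \<theta>) = carrier (G_b G c)
             \<and> i ` carrier (Spin d) = kernel (H_grp d G c \<theta>) (G_b G c) p"
proof -
  interpret pin_tensor G T c \<theta> d
    using assms(1,3) by unfold_locales
  show ?thesis
    using spin_incl_hom continuous_map_spin_incl inj_on_spin_incl[OF assms(2)]
      snd_image_hom continuous_map_snd_image snd_image_surj image_spin_incl_eq_kernel
    by blast
qed

end
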